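(* Let $\alpha\in[0,2)$ and $m\in\mathbb{N}$, and let $h_{2m+\alpha}(t)=|t|^{2m+\alpha}$ on $[-1,1]$ (with $|t|^0=1$). Then \[ P_{\mathcal{A}_+}(h_{2m+\alpha})=a_mt^{2m}+b_mt^{2m+2}, \] where \[ a_m=\frac{(4m+1)(4m+3)}{(4m+1+\alpha)(4m+3+\alpha)}\cdot\frac{2-\alpha}{2},\qquad b_m=\frac{(4m+3)(4m+5)}{(4m+1+\alpha)(4m+3+\alpha)}\cdot\frac{\alpha}{2}. \] Moreover, \[ d(h_{2m+\alpha},\mathcal{A}_+)=\frac{\sqrt2\,\alpha(2-\alpha)}{(4m+\alpha+1)(4m+\alpha+3)\sqrt{4m+2\alpha+1}}, \qquad \lambda(h_{2m+\alpha},\mathcal{A}_+)=\frac{\alpha(2-\alpha)}{(4m+\alpha+1)(4m+\alpha+3)}. \]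
   Context: $\mathbb{N}=\{0,1,2,\dots\}$. $L^2([-1,1])$ is the real $L^2$ space for Lebesgue measure. $\mathcal{A}_+=\{\sum_{n=0}^\infty a_nt^n : a_n\ge0,\ \text{the series converges in }L^2([-1,1])\}$ (convergence of partial sums); it is a closed convex cone, and $P_{\mathcal{A}_+}$ denotes the metric projection onto it (the unique nearest point in $\mathcal{A}_+$). $d(w,\mathcal{A}_+)=\inf\{\|w-u\|:u\in\mathcal{A}_+\}$ and, for $w\neq0$, $\lambda(w,\mathcal{A}_+)=d(w,\mathcal{A}_+)/\|w\|$, norms in $L^2([-1,1])$. *)

theory Defs
  imports "HOL-Analysis.Analysis"
begin

text \<open>Real L2([-1,1]) for Lebesgue measure, represented by functions real => real
  (elements are determined up to a.e. equality on [-1,1]).\<close>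

definition L2 :: "(real \<Rightarrow> real) \<Rightarrow> bool" where
  "L2 f \<longleftrightarrow> (\<lambda>t. indicator {-1..1} t * f t) \<in> borel_measurable lborel
      \<and> set_integrable lborel {-1..1::real} (\<lambda>t. (f t)^2)"

definition l2norm :: "(real \<Rightarrow> real) \<Rightarrow> real" where
  "l2norm f = sqrt (LINT t:{-1..1::real}|lborel. (f t)^2)"

definition A_plus :: "(real \<Rightarrow> real) set" where
  "A_plus = {u. L2 u \<and> (\<exists>a::nat \<Rightarrow> real. (\<forall>n. a n \<ge> 0) \<and>
      (\<lambda>N. l2norm (\<lambda>t. u t - (\<Sum>n<N. a n * t ^ n))) \<longlonglongrightarrow> 0)}"

definition is_proj_A_plus :: "(real \<Rightarrow> real) \<Rightarrow> (real \<Rightarrow> real) \<Rightarrow> bool" where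
  "is_proj_A_plus w u \<longleftrightarrow> u \<in> A_plus \<and>
      (\<forall>v\<in>A_plus. l2norm (\<lambda>t. w t - u t) \<le> l2norm (\<lambda>t. w t - v t))"

definition dist_A_plus :: "(real \<Rightarrow> real) \<Rightarrow> real" where
  "dist_A_plus w = (INF u\<in>A_plus. l2norm (\<lambda>t. w t - u t))"

definition lambda_A_plus :: "(real \<Rightarrow> real) \<Rightarrow> real" where
  "lambda_A_plus w = dist_A_plus w / l2norm w"

definition habs :: "real \<Rightarrow> real \<Rightarrow> real" where
  "habs e t = (if e = 0 then 1 else \<bar>t\<bar> powr e)"

end

theory Submission
  imports Defs
begin

text \<open>
  Write \<open>u = a t^(2m) + b t^(2m+2)\<close> and \<open>r = h - u\<close>. Since \<open>A_plus\<close> is the closed cone generated by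
  the monomials, \<open>u\<close> is the projection of \<open>h\<close> as soon as \<open>\<langle>r, u\<rangle> = 0\<close> and \<open>\<langle>r, t^n\<rangle> \<le> 0\<close> for
  all \<open>n\<close>: then \<open>\<langle>r, v\<rangle> \<le> 0\<close> on the whole cone, and expanding \<open>h - v = r + (u - v)\<close> gives
  \<open>\<parallel>h - v\<parallel>^2 \<ge> \<parallel>r\<parallel>^2 + \<parallel>u - v\<parallel>^2\<close>, hence optimality, uniqueness and \<open>d(h, A_plus) = \<parallel>r\<parallel>\<close>.
  The moments of \<open>r\<close> are explicit: the odd ones vanish by symmetry, and the one against \<open>t^(2k)\<close>
  is a negative multiple of \<open>(k - m)(k - m - 1)\<close>, which is never negative for integers and vanishes
  exactly for \<open>k = m, m + 1\<close>; this is what the choice of \<open>a\<close> and \<open>b\<close> achieves.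
\<close>

section \<open>Moments of \<open>|t|^p\<close> on \<open>[-1, 1]\<close>\<close>

lemma habs_minus [simp]: "habs p (-t) = habs p t"
  by (simp add: habs_def)

lemma habs_0 [simp]: "habs 0 t = 1"
  by (simp add: habs_def)

lemma habs_mult_2: "habs (2 * p) t = habs p t * habs p t"
  by (simp add: habs_def powr_add[symmetric])

lemma habs_measurable [measurable]: "habs p \<in> borel_measurable borel"
  unfolding habs_def by measurable

lemma abs_habs_mult_power_le_1:
  assumes "0 \<le> p" "\<bar>t\<bar> \<le> 1"
  shows "\<bar>habs p t * t ^ n\<bar> \<le> 1"
proof -
  have "\<bar>habs p t\<bar> \<le> 1"
    using powr_mono2[of p "\<bar>t\<bar>" 1] assms by (simp add: habs_def)
  moreover have "\<bar>t ^ n\<bar> \<le> 1"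
    using assms(2) by (simp add: power_abs power_le_one)
  ultimately show ?thesis
    by (simp add: abs_mult mult_le_one)
qed

lemma habs_mult_power_has_integral_0_1:
  assumes "0 \<le> p"
  shows "((\<lambda>t. habs p t * t ^ n) has_integral 1 / (p + n + 1)) {0..1}"
proof -
  define q where "q = p + n + 1"
  have q: "1 \<le> q"
    using assms by (simp add: q_def)
  define F where "F t = t powr q / q" for t
  have "((\<lambda>t. habs p t * t ^ n) has_integral (F 1 - F 0)) {0..1}"
  proof (rule fundamental_theorem_of_calculus_interior)
    have "continuous_on {0..1} (\<lambda>t::real. t powr q)"
      using q by (intro continuous_on_powr' continuous_on_id continuous_on_const) auto
    then show "continuous_on {0..1} F"
      unfolding F_def using q by (intro continuous_on_divide continuous_on_const) auto
  next
    fix x :: real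
    assume x: "x \<in> {0<..<1}"
    have "(F has_real_derivative (q * x powr (q - 1)) / q) (at x)"
      unfolding F_def using x by (intro DERIV_cdivide has_real_derivative_powr) auto
    moreover have "(q * x powr (q - 1)) / q = habs p x * x ^ n"
      using x q by (auto simp: q_def habs_def powr_add powr_realpow)
    ultimately show "(F has_vector_derivative habs p x * x ^ n) (at x)"
      by (simp add: has_real_derivative_iff_has_vector_derivative)
  qed simp
  moreover have "F 1 - F 0 = 1 / (p + n + 1)"
    using q by (simp add: F_def q_def)
  ultimately show ?thesis
    by simp
qed

lemma habs_mult_power_has_integral:
  assumes "0 \<le> p"
  shows "((\<lambda>t. habs p t * t ^ n) has_integral (1 + (-1) ^ n) / (p + n + 1)) {-1..1}"
proof -
  let ?f = "\<lambda>t. habs p t * t ^ n"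
  have reflect: "(-1) ^ n * ?f t = ?f (-t)" for t
    by (simp only: power_minus[of t n] habs_minus mult.left_commute)
  have "((\<lambda>t. ?f (-t)) has_integral (-1) ^ n * (1 / (p + n + 1))) {- 0..- (- 1)}"
    using has_integral_mult_right[OF habs_mult_power_has_integral_0_1[OF assms, of n], of "(-1) ^ n"]
    by (simp only: reflect minus_zero minus_minus)
  then have left: "(?f has_integral (-1) ^ n * (1 / (p + n + 1))) {-1..0}"
    by (rule has_integral_reflect_real[THEN iffD1])
  have "(?f has_integral (-1) ^ n * (1 / (p + n + 1)) + 1 / (p + n + 1)) {-1..1}"
    by (rule has_integral_combine[OF _ _ left habs_mult_power_has_integral_0_1[OF assms]]) auto
  then show ?thesis
    by (simp add: add_divide_distrib add.commute)
qed

lemma set_integrable_habs_mult_power: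
  assumes "0 \<le> p"
  shows "set_integrable lborel {-1..1} (\<lambda>t. habs p t * t ^ n)"
  unfolding set_integrable_def
proof (rule integrableI_bounded_set[where A = "{-1..1}" and B = 1])
  show "AE t in lborel. t \<in> {-1..1} \<longrightarrow> norm (indicator {-1..1} t *\<^sub>R (habs p t * t ^ n)) \<le> 1"
    using abs_habs_mult_power_le_1[OF assms] by (auto simp: abs_le_iff)
qed (auto simp: indicator_def)

lemma set_integral_habs_mult_power:
  assumes "0 \<le> p"
  shows "(LINT t:{-1..1}|lborel. habs p t * t ^ n) = (1 + (-1) ^ n) / (p + n + 1)"
  using set_borel_integral_eq_integral(2)[OF set_integrable_habs_mult_power[OF assms]]
    habs_mult_power_has_integral[OF assms]
  by (simp add: integral_unique)

section \<open>The inner product space \<open>L2([-1, 1])\<close>\<close>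

lemma L2_measurable: "L2 f \<Longrightarrow> (\<lambda>t. indicator {-1..1} t * f t) \<in> borel_measurable lborel"
  by (simp add: L2_def)

lemma L2_set_integrable_square: "L2 f \<Longrightarrow> set_integrable lborel {-1..1} (\<lambda>t. f t * f t)"
  by (simp add: L2_def power2_eq_square)

lemma set_integrable_L2_mult:
  assumes f: "L2 f" and g: "L2 g"
  shows "set_integrable lborel {-1..1} (\<lambda>t. f t * g t)"
proof -
  have "set_integrable lborel {-1..1} (\<lambda>t. f t * f t + g t * g t)"
    using L2_set_integrable_square[OF f] L2_set_integrable_square[OF g] by (rule set_integral_add)
  then show ?thesis
    unfolding set_integrable_def
  proof (rule Bochner_Integration.integrable_bound)
    have "(\<lambda>t. (indicator {-1..1} t * f t) * (indicator {-1..1} t * g t)) \<in> borel_measurable lborel"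
      using L2_measurable[OF f] L2_measurable[OF g] by measurable
    moreover have "(\<lambda>t. (indicator {-1..1} t * f t) * (indicator {-1..1} t * g t))
        = (\<lambda>t. indicator {-1..1} t *\<^sub>R (f t * g t))"
      by (auto simp: indicator_def fun_eq_iff)
    ultimately show "(\<lambda>t. indicator {-1..1} t *\<^sub>R (f t * g t)) \<in> borel_measurable lborel"
      by simp
    have "\<bar>x * y\<bar> \<le> x * x + y * y" for x y :: real
    proof -
      have "2 * \<bar>x * y\<bar> \<le> x * x + y * y"
        using sum_squares_bound[of "\<bar>x\<bar>" "\<bar>y\<bar>"] by (simp add: abs_mult power2_eq_square)
      then show ?thesis
        using abs_ge_zero[of "x * y"] by linarith
    qed
    then show "AE t in lborel. norm (indicator {-1..1} t *\<^sub>R (f t * g t))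
        \<le> norm (indicator {-1..1} t *\<^sub>R (f t * f t + g t * g t))"
      by (intro AE_I2) (simp split: split_indicator)
  qed
qed

lemma L2_add:
  assumes f: "L2 f" and g: "L2 g"
  shows "L2 (\<lambda>t. f t + g t)"
proof -
  have "set_integrable lborel {-1..1} (\<lambda>t. f t * f t + 2 * (f t * g t) + g t * g t)"
    using L2_set_integrable_square[OF f] L2_set_integrable_square[OF g] set_integrable_L2_mult[OF f g]
    by (intro set_integral_add set_integrable_mult_right)
  moreover have "(\<lambda>t. indicator {-1..1} t * (f t + g t)) \<in> borel_measurable lborel"
    using L2_measurable[OF f] L2_measurable[OF g] by (simp add: distrib_left)
  ultimately show ?thesis
    unfolding L2_def by (simp add: power2_eq_square algebra_simps)
qed

lemma L2_cmult:
  assumes "L2 f"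
  shows "L2 (\<lambda>t. c * f t)"
proof -
  have "set_integrable lborel {-1..1} (\<lambda>t. c * c * (f t * f t))"
    using L2_set_integrable_square[OF assms] by (rule set_integrable_mult_right)
  moreover have "(\<lambda>t. indicator {-1..1} t * (c * f t)) \<in> borel_measurable lborel"
    using borel_measurable_times[OF borel_measurable_const[of c] L2_measurable[OF assms]]
    by (simp add: mult.left_commute)
  ultimately show ?thesis
    unfolding L2_def by (simp add: power2_eq_square algebra_simps)
qed

lemma L2_diff: "L2 f \<Longrightarrow> L2 g \<Longrightarrow> L2 (\<lambda>t. f t - g t)"
  using L2_add[of f "\<lambda>t. (-1) * g t"] L2_cmult[of g "-1"] by simp

lemma L2_habs_mult_power:
  assumes "0 \<le> p"
  shows "L2 (\<lambda>t. habs p t * t ^ n)"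
proof -
  have "set_integrable lborel {-1..1} (\<lambda>t. habs (2 * p) t * t ^ (2 * n))"
    using assms by (intro set_integrable_habs_mult_power) simp
  moreover have "habs (2 * p) t * t ^ (2 * n) = (habs p t * t ^ n)\<^sup>2" for t
    unfolding habs_mult_2 mult.commute[of 2 n] power_mult by (simp add: power2_eq_square ac_simps)
  ultimately show ?thesis
    unfolding L2_def by simp
qed

lemma L2_habs: "0 \<le> p \<Longrightarrow> L2 (habs p)"
  using L2_habs_mult_power[of p 0] by simp

lemma L2_power: "L2 (\<lambda>t. t ^ n)"
  using L2_habs_mult_power[of 0 n] by simp

lemma L2_sum_monomials: "L2 (\<lambda>t. \<Sum>n<N. c n * t ^ n)"
proof (induction N)
  case 0
  then show ?case
    using L2_cmult[OF L2_power[of 0], of 0] by simp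
next
  case (Suc N)
  then show ?case
    using L2_add[OF Suc L2_cmult[OF L2_power[of N], of "c N"]] by simp
qed

definition inner_L2 :: "(real \<Rightarrow> real) \<Rightarrow> (real \<Rightarrow> real) \<Rightarrow> real" where
  "inner_L2 f g = (LINT t:{-1..1}|lborel. f t * g t)"

lemma inner_L2_self_nonneg: "0 \<le> inner_L2 f f"
  unfolding inner_L2_def set_lebesgue_integral_def
  by (rule Bochner_Integration.integral_nonneg) (simp split: split_indicator)

lemma l2norm_eq_sqrt_inner_L2: "l2norm f = sqrt (inner_L2 f f)"
  by (simp add: l2norm_def inner_L2_def power2_eq_square)

lemma inner_L2_commute: "inner_L2 f g = inner_L2 g f"
  by (simp add: inner_L2_def mult.commute)

lemma inner_L2_add_right:
  "L2 f \<Longrightarrow> L2 g \<Longrightarrow> L2 k \<Longrightarrow> inner_L2 f (\<lambda>t. g t + k t) = inner_L2 f g + inner_L2 f k"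
  unfolding inner_L2_def
  by (simp add: distrib_left set_integral_add(2)[OF set_integrable_L2_mult set_integrable_L2_mult])

lemma inner_L2_diff_right:
  "L2 f \<Longrightarrow> L2 g \<Longrightarrow> L2 k \<Longrightarrow> inner_L2 f (\<lambda>t. g t - k t) = inner_L2 f g - inner_L2 f k"
  unfolding inner_L2_def
  by (simp add: right_diff_distrib set_integral_diff(2)[OF set_integrable_L2_mult set_integrable_L2_mult])

lemma inner_L2_cmult_right: "inner_L2 f (\<lambda>t. c * g t) = c * inner_L2 f g"
  unfolding inner_L2_def by (simp add: mult.left_commute)

lemma inner_L2_add_left:
  "L2 f \<Longrightarrow> L2 g \<Longrightarrow> L2 k \<Longrightarrow> inner_L2 (\<lambda>t. f t + g t) k = inner_L2 f k + inner_L2 g k"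
  using inner_L2_add_right[of k f g] by (simp add: inner_L2_commute)

lemma inner_L2_diff_left:
  "L2 f \<Longrightarrow> L2 g \<Longrightarrow> L2 k \<Longrightarrow> inner_L2 (\<lambda>t. f t - g t) k = inner_L2 f k - inner_L2 g k"
  using inner_L2_diff_right[of k f g] by (simp add: inner_L2_commute)

lemma inner_L2_cmult_left: "inner_L2 (\<lambda>t. c * f t) g = c * inner_L2 f g"
  using inner_L2_cmult_right[of g c f] by (simp add: inner_L2_commute)

lemma inner_L2_power_habs:
  "0 \<le> p \<Longrightarrow> inner_L2 (\<lambda>t. t ^ n) (habs p) = (1 + (-1) ^ n) / (p + n + 1)"
  using set_integral_habs_mult_power[of p n] by (simp add: inner_L2_def mult.commute)

lemma inner_L2_power_power: "inner_L2 (\<lambda>t. t ^ i) (\<lambda>t. t ^ n) = (1 + (-1) ^ (i + n)) / (i + n + 1)"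
  using set_integral_habs_mult_power[of 0 "i + n"] by (simp add: inner_L2_def power_add)

lemma inner_L2_habs_habs: "0 \<le> p \<Longrightarrow> inner_L2 (habs p) (habs p) = 2 / (2 * p + 1)"
  using set_integral_habs_mult_power[of "2 * p" 0] by (simp add: inner_L2_def habs_mult_2)

lemma inner_L2_diff_two_monomials_left:
  assumes "L2 f" "L2 g"
  shows "inner_L2 (\<lambda>t. f t - (a * t ^ i + b * t ^ j)) g
    = inner_L2 f g - (a * inner_L2 (\<lambda>t. t ^ i) g + b * inner_L2 (\<lambda>t. t ^ j) g)"
  using assms
  by (simp add: inner_L2_diff_left inner_L2_add_left inner_L2_cmult_left L2_add L2_cmult L2_power)

lemma inner_L2_self_add:
  assumes f: "L2 f" and g: "L2 g"
  shows "inner_L2 (\<lambda>t. f t + g t) (\<lambda>t. f t + g t) = inner_L2 f f + 2 * inner_L2 f g + inner_L2 g g"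
proof -
  have "inner_L2 (\<lambda>t. f t + g t) h = inner_L2 f h + inner_L2 g h" if "L2 h" for h
    using inner_L2_add_left[OF f g that] .
  then show ?thesis
    using f g L2_add[OF f g] by (simp add: inner_L2_add_right inner_L2_commute[of g f])
qed

lemma inner_L2_sum_monomials_right:
  assumes "L2 r"
  shows "inner_L2 r (\<lambda>t. \<Sum>n<N. c n * t ^ n) = (\<Sum>n<N. c n * inner_L2 r (\<lambda>t. t ^ n))"
proof (induction N)
  case 0
  then show ?case
    using inner_L2_cmult_right[of r 0 "\<lambda>t. 1"] by simp
next
  case (Suc N)
  have "inner_L2 r (\<lambda>t. \<Sum>n<Suc N. c n * t ^ n)
      = inner_L2 r (\<lambda>t. \<Sum>n<N. c n * t ^ n) + inner_L2 r (\<lambda>t. c N * t ^ N)"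
    using inner_L2_add_right[OF assms L2_sum_monomials L2_cmult[OF L2_power]] by simp
  then show ?case
    using Suc by (simp add: inner_L2_cmult_right)
qed

lemma inner_L2_young:
  assumes f: "L2 f" and g: "L2 g" and c: "0 < c"
  shows "2 * \<bar>inner_L2 f g\<bar> \<le> c * inner_L2 f f + inner_L2 g g / c"
proof -
  let ?bound = "\<lambda>t. c * (f t * f t) + (g t * g t) / c"
  have fg: "set_integrable lborel {-1..1} (\<lambda>t. f t * g t)"
    by (rule set_integrable_L2_mult[OF f g])
  have bound: "set_integrable lborel {-1..1} ?bound"
    using set_integrable_L2_mult[OF f f] set_integrable_L2_mult[OF g g]
    by (intro set_integral_add set_integrable_mult_right set_integrable_divide)
  have pointwise_abs: "2 * \<bar>f t * g t\<bar> \<le> ?bound t" for t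
  proof -
    have "0 \<le> (c * \<bar>f t\<bar> - \<bar>g t\<bar>)\<^sup>2 / c"
      using c by simp
    also have "\<dots> = ?bound t - 2 * \<bar>f t * g t\<bar>"
      using c by (simp add: field_simps power2_eq_square abs_mult)
    finally show ?thesis
      by simp
  qed
  have pointwise: "2 * (f t * g t) \<le> ?bound t" "-2 * (f t * g t) \<le> ?bound t" for t
    using pointwise_abs[of t] abs_ge_self[of "f t * g t"] abs_ge_minus_self[of "f t * g t"]
    by linarith+
  have integral_cmult: "(LINT t:{-1..1}|lborel. k * (f t * g t)) = k * inner_L2 f g" for k
    unfolding inner_L2_def by (rule set_integral_mult_right)
  have "(LINT t:{-1..1}|lborel. 2 * (f t * g t)) \<le> (LINT t:{-1..1}|lborel. ?bound t)"
    using pointwise(1) fg bound by (intro set_integral_mono set_integrable_mult_right)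
  moreover have "(LINT t:{-1..1}|lborel. -2 * (f t * g t)) \<le> (LINT t:{-1..1}|lborel. ?bound t)"
    using pointwise(2) fg bound by (intro set_integral_mono set_integrable_mult_right)
  moreover have "(LINT t:{-1..1}|lborel. ?bound t) = c * inner_L2 f f + inner_L2 g g / c"
    unfolding inner_L2_def using set_integrable_L2_mult[OF f f] set_integrable_L2_mult[OF g g]
    by (subst set_integral_add(2)) (auto intro: set_integrable_mult_right set_integrable_divide)
  ultimately show ?thesis
    using integral_cmult[of 2] integral_cmult[of "-2"] by linarith
qed

lemma inner_L2_nonpos_limit:
  assumes r: "L2 r" and v: "L2 v" and p: "\<And>N. L2 (p N)"
    and nonpos: "\<And>N. inner_L2 r (p N) \<le> 0"
    and lim: "(\<lambda>N. l2norm (\<lambda>t. v t - p N t)) \<longlonglongrightarrow> 0"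
  shows "inner_L2 r v \<le> 0"
proof (rule ccontr)
  \<comment> \<open>Young's inequality with the weight \<open>c\<close> stands in for Cauchy-Schwarz.\<close>
  assume "\<not> inner_L2 r v \<le> 0"
  then have pos: "0 < inner_L2 r v"
    by simp
  define c where "c = inner_L2 r v / (inner_L2 r r + 1)"
  have c: "0 < c" "c * inner_L2 r r < inner_L2 r v"
    using pos inner_L2_self_nonneg[of r] by (simp_all add: c_def field_simps)
  have "0 < sqrt (c * inner_L2 r v)"
    using c pos by simp
  then obtain N where N: "\<bar>l2norm (\<lambda>t. v t - p N t) - 0\<bar> < sqrt (c * inner_L2 r v)"
    using lim unfolding LIMSEQ_def dist_real_def by blast
  define w where "w = (\<lambda>t. v t - p N t)"
  have ww: "inner_L2 w w < c * inner_L2 r v"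
    using N inner_L2_self_nonneg[of w] by (simp add: w_def l2norm_eq_sqrt_inner_L2)
  have w: "L2 w"
    unfolding w_def by (rule L2_diff[OF v p])
  have "inner_L2 w w / c < inner_L2 r v"
    using ww c(1) by (simp add: pos_divide_less_eq mult.commute)
  then have "2 * \<bar>inner_L2 r w\<bar> < 2 * inner_L2 r v"
    using inner_L2_young[OF r w c(1)] c(2) by linarith
  then have "inner_L2 r v - inner_L2 r (p N) < inner_L2 r v"
    using inner_L2_diff_right[OF r v p[of N]] unfolding w_def by linarith
  with nonpos[of N] show False
    by simp
qed

lemma inner_L2_self_eq_0_AE:
  assumes "L2 f" "inner_L2 f f = 0"
  shows "AE t in lborel. t \<in> {-1..1} \<longrightarrow> f t = 0"
proof -
  define d where "d t = indicator {-1..1} t *\<^sub>R (f t * f t)" for t :: real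
  have "integrable lborel d"
    using set_integrable_L2_mult[OF assms(1) assms(1)] unfolding d_def set_integrable_def .
  moreover have "integral\<^sup>L lborel d = 0"
    using assms(2) unfolding d_def inner_L2_def set_lebesgue_integral_def .
  ultimately have "AE t in lborel. d t = 0"
    by (subst (asm) integral_nonneg_eq_0_iff_AE) (auto simp: d_def split: split_indicator)
  then show ?thesis
    by eventually_elim (auto simp: d_def split: split_indicator)
qed

section \<open>Projection onto the cone \<open>A_plus\<close>\<close>

lemma inner_L2_A_plus_nonpos:
  assumes r: "L2 r" and monomials: "\<And>n. inner_L2 r (\<lambda>t. t ^ n) \<le> 0" and v: "v \<in> A_plus"
  shows "inner_L2 r v \<le> 0"
proof -
  obtain c where v': "L2 v" and c: "\<And>n. 0 \<le> c n"
    and lim: "(\<lambda>N. l2norm (\<lambda>t. v t - (\<Sum>n<N. c n * t ^ n))) \<longlonglongrightarrow> 0"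
    using v unfolding A_plus_def by blast
  show ?thesis
  proof (rule inner_L2_nonpos_limit[OF r v' L2_sum_monomials _ lim])
    show "inner_L2 r (\<lambda>t. \<Sum>n<N. c n * t ^ n) \<le> 0" for N
      unfolding inner_L2_sum_monomials_right[OF r]
      using c monomials by (intro sum_nonpos mult_nonneg_nonpos)
  qed
qed

lemma A_plus_pythagoras:
  assumes w: "L2 w" and u: "u \<in> A_plus" and v: "v \<in> A_plus"
    and orth: "inner_L2 (\<lambda>t. w t - u t) u = 0"
    and monomials: "\<And>n. inner_L2 (\<lambda>t. w t - u t) (\<lambda>t. t ^ n) \<le> 0"
  shows "inner_L2 (\<lambda>t. w t - u t) (\<lambda>t. w t - u t) + inner_L2 (\<lambda>t. u t - v t) (\<lambda>t. u t - v t)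
    \<le> inner_L2 (\<lambda>t. w t - v t) (\<lambda>t. w t - v t)"
proof -
  have u': "L2 u" and v': "L2 v"
    using u v by (simp_all add: A_plus_def)
  let ?r = "\<lambda>t. w t - u t"
  have r: "L2 ?r"
    by (rule L2_diff[OF w u'])
  have "inner_L2 (\<lambda>t. w t - v t) (\<lambda>t. w t - v t)
      = inner_L2 ?r ?r + 2 * inner_L2 ?r (\<lambda>t. u t - v t) + inner_L2 (\<lambda>t. u t - v t) (\<lambda>t. u t - v t)"
    using inner_L2_self_add[OF r L2_diff[OF u' v']] by simp
  then show ?thesis
    unfolding inner_L2_diff_right[OF r u' v']
    using orth inner_L2_A_plus_nonpos[OF r monomials v] by simp
qed

lemma A_plus_projection_criterion:
  assumes w: "L2 w" and u: "u \<in> A_plus"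
    and orth: "inner_L2 (\<lambda>t. w t - u t) u = 0"
    and monomials: "\<And>n. inner_L2 (\<lambda>t. w t - u t) (\<lambda>t. t ^ n) \<le> 0"
  shows "is_proj_A_plus w u"
    and "\<And>u'. is_proj_A_plus w u' \<Longrightarrow> AE t in lborel. t \<in> {-1..1} \<longrightarrow> u' t = u t"
    and "dist_A_plus w = l2norm (\<lambda>t. w t - u t)"
proof -
  note pythagoras = A_plus_pythagoras[OF w u _ orth monomials]
  have optimal: "l2norm (\<lambda>t. w t - u t) \<le> l2norm (\<lambda>t. w t - v t)" if "v \<in> A_plus" for v
    using pythagoras[OF that] inner_L2_self_nonneg[of "\<lambda>t. u t - v t"]
    by (simp add: l2norm_eq_sqrt_inner_L2)
  then show proj: "is_proj_A_plus w u"
    using u by (simp add: is_proj_A_plus_def)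
  show "AE t in lborel. t \<in> {-1..1} \<longrightarrow> u' t = u t" if "is_proj_A_plus w u'" for u'
  proof -
    have u': "u' \<in> A_plus" "l2norm (\<lambda>t. w t - u' t) \<le> l2norm (\<lambda>t. w t - u t)"
      using that u unfolding is_proj_A_plus_def by auto
    then have "inner_L2 (\<lambda>t. u t - u' t) (\<lambda>t. u t - u' t) = 0"
      using pythagoras[OF u'(1)] inner_L2_self_nonneg[of "\<lambda>t. u t - u' t"]
        inner_L2_self_nonneg[of "\<lambda>t. w t - u' t"]
      by (simp add: l2norm_eq_sqrt_inner_L2)
    moreover have "L2 (\<lambda>t. u t - u' t)"
      using u u' by (intro L2_diff) (simp_all add: A_plus_def)
    ultimately show ?thesis
      by (auto dest: inner_L2_self_eq_0_AE)
  qed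
  show "dist_A_plus w = l2norm (\<lambda>t. w t - u t)"
    unfolding dist_A_plus_def using u optimal by (intro cInf_eq_minimum) auto
qed

lemma two_monomials_in_A_plus:
  assumes "0 \<le> a" "0 \<le> b" "i \<noteq> j"
  shows "(\<lambda>t. a * t ^ i + b * t ^ j) \<in> A_plus"
proof -
  define c where "c n = (if n = i then a else if n = j then b else 0)" for n
  have partial_sums: "(\<Sum>n<N. c n * t ^ n) = a * t ^ i + b * t ^ j" if "max i j < N" for N t
  proof -
    have "(\<Sum>n<N. c n * t ^ n)
        = (\<Sum>n<N. (if n = i then a * t ^ i else 0) + (if n = j then b * t ^ j else 0))"
      using assms(3) by (intro sum.cong) (auto simp: c_def)
    then show ?thesis
      using that by (simp add: sum.distrib)
  qed
  have "eventually (\<lambda>N. l2norm (\<lambda>t. a * t ^ i + b * t ^ j - (\<Sum>n<N. c n * t ^ n)) = 0) sequentially"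
    using eventually_gt_at_top[of "max i j"] by eventually_elim (simp add: partial_sums l2norm_def)
  then have "(\<lambda>N. l2norm (\<lambda>t. a * t ^ i + b * t ^ j - (\<Sum>n<N. c n * t ^ n))) \<longlonglongrightarrow> 0"
    by (rule tendsto_eventually)
  moreover have "L2 (\<lambda>t. a * t ^ i + b * t ^ j)"
    by (intro L2_add L2_cmult L2_power)
  moreover have "\<forall>n. 0 \<le> c n"
    using assms by (simp add: c_def)
  ultimately show ?thesis
    unfolding A_plus_def by blast
qed

section \<open>The residual of \<open>|t|^(2m+\<alpha>)\<close>\<close>

definition coeff_a :: "real \<Rightarrow> nat \<Rightarrow> real" where
  "coeff_a \<alpha> m = (4*real m+1)*(4*real m+3) / ((4*real m+1+\<alpha>)*(4*real m+3+\<alpha>)) * ((2-\<alpha>)/2)"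

definition coeff_b :: "real \<Rightarrow> nat \<Rightarrow> real" where
  "coeff_b \<alpha> m = (4*real m+3)*(4*real m+5) / ((4*real m+1+\<alpha>)*(4*real m+3+\<alpha>)) * (\<alpha>/2)"

definition proj_poly :: "real \<Rightarrow> nat \<Rightarrow> real \<Rightarrow> real" where
  "proj_poly \<alpha> m t = coeff_a \<alpha> m * t ^ (2*m) + coeff_b \<alpha> m * t ^ (2*m+2)"

lemma proj_poly_in_A_plus:
  assumes "0 \<le> \<alpha>" "\<alpha> \<le> 2"
  shows "proj_poly \<alpha> m \<in> A_plus"
proof -
  have "0 \<le> coeff_a \<alpha> m" "0 \<le> coeff_b \<alpha> m"
    using assms by (simp_all add: coeff_a_def coeff_b_def)
  then show ?thesis
    using two_monomials_in_A_plus[of "coeff_a \<alpha> m" "coeff_b \<alpha> m" "2*m" "2*m+2"]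
    by (simp add: proj_poly_def[abs_def])
qed

lemma coeff_moment_identity:
  fixes \<alpha> :: real and m k :: nat
  assumes "0 \<le> \<alpha>"
  shows "2 / (2*real m+\<alpha>+2*real k+1) - coeff_a \<alpha> m * (2 / (2*real m+2*real k+1)) - coeff_b \<alpha> m * (2 / (2*real m+2*real k+3))
    = -(8*\<alpha>*(2-\<alpha>)*((real k - m)*(real k - m - 1)))
      / ((4*real m+1+\<alpha>)*(4*real m+3+\<alpha>)*(2*real m+\<alpha>+2*real k+1)*(2*real m+2*real k+1)*(2*real m+2*real k+3))"
proof -
  have "4*real m+1+\<alpha> \<noteq> 0" "4*real m+3+\<alpha> \<noteq> 0" "2*real m+\<alpha>+2*real k+1 \<noteq> 0"
    "2*real m+2*real k+1 \<noteq> 0" "2*real m+2*real k+3 \<noteq> 0"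
    using assms by linarith+
  then show ?thesis
    unfolding coeff_a_def coeff_b_def by (simp add: divide_simps) algebra
qed

lemma coeff_norm_identity:
  fixes \<alpha> :: real and m :: nat
  assumes "0 \<le> \<alpha>"
  shows "2 / (4*real m+2*\<alpha>+1) - coeff_a \<alpha> m * (2 / (4*real m+\<alpha>+1)) - coeff_b \<alpha> m * (2 / (4*real m+\<alpha>+3))
    = (\<alpha>*(2-\<alpha>) / ((4*real m+\<alpha>+1)*(4*real m+\<alpha>+3)))\<^sup>2 * (2 / (4*real m+2*\<alpha>+1))"
proof -
  have "4*real m+\<alpha>+1 \<noteq> 0" "4*real m+\<alpha>+3 \<noteq> 0" "4*real m+2*\<alpha>+1 \<noteq> 0"
    using assms by linarith+
  then show ?thesis
    unfolding coeff_a_def coeff_b_def by (simp add: divide_simps power2_eq_square) algebra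
qed

lemma consecutive_product_nonneg: "0 \<le> (real k - real m) * (real k - real m - 1)"
  by (cases "k \<le> m") (auto intro: mult_nonpos_nonpos mult_nonneg_nonneg)

lemma L2_proj_poly: "L2 (proj_poly \<alpha> m)"
  unfolding proj_poly_def[abs_def] by (intro L2_add L2_cmult L2_power)

lemma L2_residual: "0 \<le> \<alpha> \<Longrightarrow> L2 (\<lambda>t. habs (2*real m+\<alpha>) t - proj_poly \<alpha> m t)"
  by (intro L2_diff L2_habs L2_proj_poly) simp

lemma inner_residual_power:
  assumes "0 \<le> \<alpha>"
  shows "inner_L2 (\<lambda>t. habs (2*real m+\<alpha>) t - proj_poly \<alpha> m t) (\<lambda>t. t ^ n)
    = (1 + (-1) ^ n) / (2*real m+\<alpha>+real n+1) - coeff_a \<alpha> m * ((1 + (-1) ^ n) / (2*real m+real n+1))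
      - coeff_b \<alpha> m * ((1 + (-1) ^ n) / (2*real m+real n+3))"
proof -
  have "inner_L2 (\<lambda>t. habs (2*real m+\<alpha>) t - proj_poly \<alpha> m t) (\<lambda>t. t ^ n)
      = inner_L2 (habs (2*real m+\<alpha>)) (\<lambda>t. t ^ n) - (coeff_a \<alpha> m * inner_L2 (\<lambda>t. t ^ (2*m)) (\<lambda>t. t ^ n)
        + coeff_b \<alpha> m * inner_L2 (\<lambda>t. t ^ (2*m+2)) (\<lambda>t. t ^ n))"
    unfolding proj_poly_def using assms
    by (intro inner_L2_diff_two_monomials_left L2_habs L2_power) simp
  moreover have "inner_L2 (\<lambda>t. t ^ n) (habs (2*real m+\<alpha>)) = (1 + (-1) ^ n) / (2*real m+\<alpha>+real n+1)"
    using assms by (simp add: inner_L2_power_habs)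
  ultimately show ?thesis
    by (simp only: inner_L2_commute[of "habs _"] inner_L2_power_power) (simp add: power_add power_mult add_ac)
qed

lemma inner_residual_power_nonpos:
  assumes "0 \<le> \<alpha>" "\<alpha> \<le> 2"
  shows "inner_L2 (\<lambda>t. habs (2*real m+\<alpha>) t - proj_poly \<alpha> m t) (\<lambda>t. t ^ n) \<le> 0"
proof (cases "even n")
  case True
  then obtain k where n: "n = 2 * k"
    by blast
  have num: "0 \<le> 8*\<alpha>*(2-\<alpha>)*((real k - m)*(real k - m - 1))"
    using assms consecutive_product_nonneg[of k m] by simp
  have den: "0 < (4*real m+1+\<alpha>)*(4*real m+3+\<alpha>)*(2*real m+\<alpha>+2*real k+1)*(2*real m+2*real k+1)*(2*real m+2*real k+3)"
    using assms by simp
  have "inner_L2 (\<lambda>t. habs (2*real m+\<alpha>) t - proj_poly \<alpha> m t) (\<lambda>t. t ^ n)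
      = -(8*\<alpha>*(2-\<alpha>)*((real k - m)*(real k - m - 1)))
        / ((4*real m+1+\<alpha>)*(4*real m+3+\<alpha>)*(2*real m+\<alpha>+2*real k+1)*(2*real m+2*real k+1)*(2*real m+2*real k+3))"
    using inner_residual_power[OF assms(1), of m n] coeff_moment_identity[OF assms(1), of m k]
    by (simp add: n add_ac)
  also have "\<dots> \<le> 0"
    using num den by (intro divide_nonpos_pos) simp_all
  finally show ?thesis .
next
  case False
  then show ?thesis
    using inner_residual_power[OF assms(1), of m n] by simp
qed

lemma inner_residual_proj_poly:
  assumes "0 \<le> \<alpha>"
  shows "inner_L2 (\<lambda>t. habs (2*real m+\<alpha>) t - proj_poly \<alpha> m t) (proj_poly \<alpha> m) = 0"
proof -
  let ?r = "\<lambda>t. habs (2*real m+\<alpha>) t - proj_poly \<alpha> m t"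
  have vanishing: "inner_L2 ?r (\<lambda>t. t ^ (2*k)) = 0" if "k = m \<or> k = m + 1" for k
    using that inner_residual_power[OF assms, of m "2*k"] coeff_moment_identity[OF assms, of m k]
    by (auto simp: add_ac)
  have "inner_L2 ?r (proj_poly \<alpha> m)
      = inner_L2 ?r (\<lambda>t. coeff_a \<alpha> m * t ^ (2*m) + coeff_b \<alpha> m * t ^ (2*(m+1)))"
    by (rule arg_cong[where f = "inner_L2 ?r"]) (simp add: fun_eq_iff proj_poly_def)
  also have "\<dots> = coeff_a \<alpha> m * inner_L2 ?r (\<lambda>t. t ^ (2*m)) + coeff_b \<alpha> m * inner_L2 ?r (\<lambda>t. t ^ (2*(m+1)))"
    by (simp only: inner_L2_add_right[OF L2_residual[OF assms] L2_cmult[OF L2_power] L2_cmult[OF L2_power]]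
        inner_L2_cmult_right)
  finally show ?thesis
    using vanishing[of m] vanishing[of "m+1"] by simp
qed

lemma inner_residual_self:
  assumes "0 \<le> \<alpha>"
  shows "inner_L2 (\<lambda>t. habs (2*real m+\<alpha>) t - proj_poly \<alpha> m t) (\<lambda>t. habs (2*real m+\<alpha>) t - proj_poly \<alpha> m t)
    = (\<alpha>*(2-\<alpha>) / ((4*real m+\<alpha>+1)*(4*real m+\<alpha>+3)))\<^sup>2 * (2 / (4*real m+2*\<alpha>+1))"
proof -
  let ?h = "habs (2*real m+\<alpha>)"
  let ?r = "\<lambda>t. ?h t - proj_poly \<alpha> m t"
  have h: "L2 ?h"
    by (rule L2_habs) (use assms in simp)
  have "inner_L2 ?r ?r = inner_L2 ?r ?h - inner_L2 ?r (proj_poly \<alpha> m)"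
    by (rule inner_L2_diff_right[OF L2_residual[OF assms] h L2_proj_poly])
  also have "inner_L2 ?r ?h = inner_L2 ?h ?h - (coeff_a \<alpha> m * inner_L2 (\<lambda>t. t ^ (2*m)) ?h
      + coeff_b \<alpha> m * inner_L2 (\<lambda>t. t ^ (2*m+2)) ?h)"
    unfolding proj_poly_def by (rule inner_L2_diff_two_monomials_left[OF h h])
  also have "\<dots> = 2 / (4*real m+2*\<alpha>+1) - coeff_a \<alpha> m * (2 / (4*real m+\<alpha>+1)) - coeff_b \<alpha> m * (2 / (4*real m+\<alpha>+3))"
  proof -
    have "inner_L2 ?h ?h = 2 / (4*real m+2*\<alpha>+1)"
      using assms by (simp add: inner_L2_habs_habs algebra_simps)
    moreover have "inner_L2 (\<lambda>t. t ^ n) ?h = (1 + (-1) ^ n) / (2*real m+\<alpha>+real n+1)" for n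
      using assms by (simp add: inner_L2_power_habs)
    ultimately show ?thesis
      by (simp only:) (simp add: algebra_simps)
  qed
  finally show ?thesis
    using inner_residual_proj_poly[OF assms] coeff_norm_identity[OF assms] by simp
qed

theorem proposition1p6:
  fixes \<alpha> :: real and m :: nat
  assumes "0 \<le> \<alpha>" and "\<alpha> < 2"
  defines "a \<equiv> (4*real m+1)*(4*real m+3) / ((4*real m+1+\<alpha>)*(4*real m+3+\<alpha>)) * ((2-\<alpha>)/2)"
      and "b \<equiv> (4*real m+3)*(4*real m+5) / ((4*real m+1+\<alpha>)*(4*real m+3+\<alpha>)) * (\<alpha>/2)"
      and "h \<equiv> habs (2*real m+\<alpha>)"
  shows "is_proj_A_plus h (\<lambda>t. a * t^(2*m) + b * t^(2*m+2)) \<and>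
    (\<forall>u. is_proj_A_plus h u \<longrightarrow>
           (AE t in lborel. t \<in> {-1..1} \<longrightarrow> u t = a * t^(2*m) + b * t^(2*m+2))) \<and>
    dist_A_plus h = sqrt 2 * \<alpha> * (2-\<alpha>) /
           ((4*real m+\<alpha>+1)*(4*real m+\<alpha>+3) * sqrt (4*real m+2*\<alpha>+1)) \<and>
    lambda_A_plus h = \<alpha> * (2-\<alpha>) / ((4*real m+\<alpha>+1)*(4*real m+\<alpha>+3))"
proof -
  define L where "L = \<alpha>*(2-\<alpha>) / ((4*real m+\<alpha>+1)*(4*real m+\<alpha>+3))"
  define G where "G = 2 / (4*real m+2*\<alpha>+1)"
  have L: "0 \<le> L" and G: "0 < G"
    using assms by (simp_all add: L_def G_def)
  have u: "a * t^(2*m) + b * t^(2*m+2) = proj_poly \<alpha> m t" for t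
    by (simp add: proj_poly_def coeff_a_def coeff_b_def a_def b_def)
  have \<alpha>: "0 \<le> \<alpha>" "\<alpha> \<le> 2"
    using assms by simp_all
  have h: "L2 h"
    unfolding h_def by (rule L2_habs) (use \<alpha> in simp)
  note criterion = A_plus_projection_criterion[OF h proj_poly_in_A_plus[OF \<alpha>], unfolded h_def,
      OF inner_residual_proj_poly[OF \<alpha>(1)] inner_residual_power_nonpos[OF \<alpha>]]
  have "l2norm (\<lambda>t. h t - proj_poly \<alpha> m t) = L * sqrt G"
    using L unfolding h_def l2norm_eq_sqrt_inner_L2 inner_residual_self[OF \<alpha>(1), of m, folded L_def G_def]
    by (simp add: real_sqrt_mult)
  then have dist: "dist_A_plus h = L * sqrt G"
    using criterion(3) unfolding h_def by simp
  have norm_h: "l2norm h = sqrt G"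
    using \<alpha>(1) by (simp add: h_def G_def l2norm_eq_sqrt_inner_L2 inner_L2_habs_habs algebra_simps)
  have lambda: "lambda_A_plus h = L"
    unfolding lambda_A_plus_def dist norm_h using G by simp
  have "L * sqrt G = sqrt 2 * \<alpha> * (2-\<alpha>) / ((4*real m+\<alpha>+1)*(4*real m+\<alpha>+3) * sqrt (4*real m+2*\<alpha>+1))"
    unfolding L_def G_def by (simp add: real_sqrt_divide)
  then show ?thesis
    using criterion(1,2) unfolding u dist lambda by (simp add: h_def L_def)
qed

end
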